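(* Let $U:\mathbb R^m_{++}\to\mathbb R$ be a concave NDAS function and let $s^{opt}$ be a maximizer of $U$ over $B_s$. Let $w^0,w^1\in W$ have weighted centers $(x^0,y^0,s^0)$ and $(x^1,y^1,s^1)$, let $g^0,g^1$ be supergradients of $U$ at $s^0,s^1$, and set $g^{0w}=(Y^0)^{-1}g^0$, $g^{1w}=(Y^1)^{-1}g^1$. Then $$\{w:\ (g^{0w})^\top(w-w^0)\ge 0,\ (g^{1w})^\top(w-w^1)\ge 0\}\cap W_{s^{opt}}\neq\emptyset.$$
   Context: Let $A\in\mathbb R^{m\times n}$ have full column rank $n\le m$ and $b\in\mathbb R^m$ be such that $\{x:Ax\le b\}$ is bounded with nonempty interior. For $w\in\mathbb R^m_{++}$ the weighted center of $w$ is the unique $(x,y,s)$ with $Ax+s=b$, $s>0$, $A^\top y=0$, $\mathrm{Diag}(s)y=w$ ($s$-vector $s$, $y$-vector $y$). Capital letters denote diagonal matrices of vectors. $W=\{w\in\mathbb R^m:w>0,\ e^\top w=1\}$. Centric $s$-vectors are $s$-vectors of weighted centers of elements of $W$; $B_s$ is their set; for centric $s$, $W_s=\{w\in W:$ the $s$-vector of $w$ is $s\}$. Supergradient of concave $U$ at $s^0$: $g$ with $U(s)\le U(s^0)+g^\top(s-s^0)$ for all $s$. A function $f:\mathbb R^m_{++}\to\mathbb R$ is NDAS (non-decreasing under affine scaling) if for every $d\in\mathbb R^m_{++}$, with $D=\mathrm{Diag}(d)$: (1) $f(s)\le\max\{f(Ds),f(D^{-1}s)\}$ for all $s\in\mathbb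 R^m_{++}$; (2) if $f(s^0)\le f(Ds^0)$ for a single $s^0\in\mathbb R^m_{++}$, then $f(s)\le f(Ds)$ for all $s\in\mathbb R^m_{++}$. *)

theory Defs
  imports "HOL-Analysis.Analysis"
begin

definition pos :: "real^'m \<Rightarrow> bool" where
  "pos v \<longleftrightarrow> (\<forall>i. v $ i > 0)"

definition polyh :: "real^'n^'m \<Rightarrow> real^'m \<Rightarrow> (real^'n) set" where
  "polyh A b = {x. \<forall>i. (A *v x) $ i \<le> b $ i}"

definition weighted_center ::
  "real^'n^'m \<Rightarrow> real^'m \<Rightarrow> real^'m \<Rightarrow> real^'n \<Rightarrow> real^'m \<Rightarrow> real^'m \<Rightarrow> bool" where
  "weighted_center A b w x y s \<longleftrightarrow>
     A *v x + s = b \<and> pos s \<and> transpose A *v y = 0 \<and> (\<forall>i. s $ i * y $ i = w $ i)"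

definition Wset :: "(real^'m) set" where
  "Wset = {w. pos w \<and> (\<Sum>i\<in>UNIV. w $ i) = 1}"

definition Bs :: "real^'n^'m \<Rightarrow> real^'m \<Rightarrow> (real^'m) set" where
  "Bs A b = {s. \<exists>w\<in>Wset. \<exists>x y. weighted_center A b w x y s}"

definition Ws :: "real^'n^'m \<Rightarrow> real^'m \<Rightarrow> real^'m \<Rightarrow> (real^'m) set" where
  "Ws A b s = {w \<in> Wset. \<exists>x y. weighted_center A b w x y s}"

definition supergradient :: "(real^'m \<Rightarrow> real) \<Rightarrow> real^'m \<Rightarrow> real^'m \<Rightarrow> bool" where
  "supergradient U s0 g \<longleftrightarrow> (\<forall>s. pos s \<longrightarrow> U s \<le> U s0 + g \<bullet> (s - s0))"

definition NDAS :: "(real^'m \<Rightarrow> real) \<Rightarrow> bool" where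
  "NDAS f \<longleftrightarrow> (\<forall>d. pos d \<longrightarrow>
     (\<forall>s. pos s \<longrightarrow> f s \<le> max (f (\<chi> i. d $ i * s $ i)) (f (\<chi> i. s $ i / d $ i))) \<and>
     ((\<exists>s0. pos s0 \<and> f s0 \<le> f (\<chi> i. d $ i * s0 $ i)) \<longrightarrow>
        (\<forall>s. pos s \<longrightarrow> f s \<le> f (\<chi> i. d $ i * s $ i))))"

end

theory Submission
  imports Defs
begin

text \<open>
  Two weighted centers (x, y, s) and (x', y', s') differ in slack by an element of the range of A,
  which is orthogonal to y; hence s' \<circ> y is again a weight vector with sum 1, and it is a weight
  whose center has s-vector s'. Taking s' = s^opt and y one of y^0, y^1 gives the candidates
  s^opt \<circ> y^0 and s^opt \<circ> y^1 in W_{s^opt}. For s^opt \<circ> y^1, the halfspace of w^0 reads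
  g^0 \<bullet> ((y^1/y^0) \<circ> s^opt - s^0) \<ge> 0, which by the supergradient inequality follows from
  U(s^0) \<le> U(s^opt) \<le> U((y^1/y^0) \<circ> s^opt); the halfspace of w^1 follows from U(s^1) \<le> U(s^opt).
  Property (1) of NDAS, with d = y^1/y^0, says that one of the two candidates works.
\<close>

lemma weighted_center_slack_diff:
  assumes "weighted_center A b w x y s" "weighted_center A b w' x' y' s'"
  shows "s' - s = A *v (x - x')"
proof -
  have "A *v x + s = A *v x' + s'"
    using assms unfolding weighted_center_def by simp
  then show ?thesis
    by (simp add: matrix_vector_mult_diff_distrib algebra_simps)
qed

lemma weighted_center_range_orthogonal:
  assumes "weighted_center A b w x y s"
  shows "(A *v z) \<bullet> y = 0"
proof -
  have "(A *v z) \<bullet> y = z \<bullet> (transpose A *v y)"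
    by (metis dot_lmul_matrix vector_transpose_matrix)
  with assms show ?thesis unfolding weighted_center_def by simp
qed

lemma weighted_center_inner_slack_eq:
  assumes "weighted_center A b w x y s" "weighted_center A b w' x' y' s'"
  shows "s' \<bullet> y = s \<bullet> y"
proof -
  have "(s' - s) \<bullet> y = 0"
    using weighted_center_slack_diff[OF assms] weighted_center_range_orthogonal[OF assms(1)]
    by simp
  then show ?thesis by (simp add: inner_diff_left)
qed

lemma weighted_center_inner_eq_sum:
  assumes "weighted_center A b w x y s"
  shows "s \<bullet> y = (\<Sum>i\<in>UNIV. w $ i)"
  using assms unfolding weighted_center_def inner_vec_def by simp

lemma weighted_center_dual_pos:
  assumes "weighted_center A b w x y s" "pos w"
  shows "y $ i > 0"
proof -
  have "s $ i > 0" "w $ i > 0" "s $ i * y $ i = w $ i"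
    using assms unfolding weighted_center_def pos_def by auto
  then show ?thesis by (metis zero_less_mult_pos)
qed

lemma weighted_center_recombine:
  assumes "weighted_center A b w x y s" "weighted_center A b w' x' y' s'"
  shows "weighted_center A b (\<chi> i. s' $ i * y $ i) x' y s'"
  using assms unfolding weighted_center_def by simp

lemma recombined_weight_in_Ws:
  assumes "weighted_center A b w x y s" "w \<in> Wset" "weighted_center A b w' x' y' s'"
  shows "(\<chi> i. s' $ i * y $ i) \<in> Ws A b s'"
proof -
  have "s' $ i > 0" "y $ i > 0" for i
    using assms weighted_center_dual_pos[OF assms(1)]
    unfolding weighted_center_def Wset_def pos_def by auto
  moreover have "s' \<bullet> y = 1"
    using weighted_center_inner_slack_eq[OF assms(1,3)] weighted_center_inner_eq_sum[OF assms(1)]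
      assms(2)
    unfolding Wset_def by simp
  ultimately have "(\<chi> i. s' $ i * y $ i) \<in> Wset"
    unfolding Wset_def pos_def by (simp add: inner_vec_def)
  with weighted_center_recombine[OF assms(1,3)] show ?thesis
    unfolding Ws_def by blast
qed

lemma scaled_supergradient_inner:
  assumes "weighted_center A b w x y s" "pos w"
  shows "(\<chi> i. g $ i / y $ i) \<bullet> ((\<chi> i. s' $ i * y' $ i) - w)
           = g \<bullet> ((\<chi> i. y' $ i / y $ i * s' $ i) - s)"
proof -
  have "g $ i / y $ i * (s' $ i * y' $ i - w $ i) = g $ i * (y' $ i / y $ i * s' $ i - s $ i)" for i
    using assms weighted_center_dual_pos[OF assms, of i]
    unfolding weighted_center_def by (simp add: field_simps)
  then show ?thesis unfolding inner_vec_def by simp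
qed

lemma supergradient_halfspace_recombined:
  assumes "weighted_center A b w x y s" "pos w" "pos y'" "pos s'"
    and "supergradient U s g" "U s \<le> U (\<chi> i. y' $ i / y $ i * s' $ i)"
  shows "(\<chi> i. g $ i / y $ i) \<bullet> ((\<chi> i. s' $ i * y' $ i) - w) \<ge> 0"
proof -
  let ?s = "\<chi> i. y' $ i / y $ i * s' $ i"
  have "pos ?s"
    using assms(3,4) weighted_center_dual_pos[OF assms(1,2)] unfolding pos_def by simp
  then have "U ?s \<le> U s + g \<bullet> (?s - s)"
    using assms(5) unfolding supergradient_def by blast
  with assms(6) show ?thesis
    unfolding scaled_supergradient_inner[OF assms(1,2)] by simp
qed

lemma NDAS_scale_or_unscale:
  assumes "NDAS U" "pos d" "pos s"
  shows "U s \<le> U (\<chi> i. d $ i * s $ i) \<or> U s \<le> U (\<chi> i. s $ i / d $ i)"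
  using assms unfolding NDAS_def le_max_iff_disj by blast

lemma common_weight_if_scaling_improves:
  assumes "sopt \<in> Bs A b" "U s0 \<le> U sopt" "U s1 \<le> U sopt"
    and "w0 \<in> Wset" "w1 \<in> Wset"
    and "weighted_center A b w0 x0 y0 s0" "weighted_center A b w1 x1 y1 s1"
    and "supergradient U s0 g0" "supergradient U s1 g1"
    and "U sopt \<le> U (\<chi> i. y1 $ i / y0 $ i * sopt $ i)"
  shows "(\<chi> i. sopt $ i * y1 $ i)
           \<in> {w. (\<chi> i. g0 $ i / y0 $ i) \<bullet> (w - w0) \<ge> 0 \<and> (\<chi> i. g1 $ i / y1 $ i) \<bullet> (w - w1) \<ge> 0}
             \<inter> Ws A b sopt"
proof -
  obtain wo xo yo where wo: "wo \<in> Wset" "weighted_center A b wo xo yo sopt"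
    using assms(1) unfolding Bs_def by blast
  have pos: "pos w0" "pos w1" "pos sopt"
    using assms(4,5) wo(2) unfolding Wset_def weighted_center_def by auto
  have y1_pos: "pos y1"
    using weighted_center_dual_pos[OF assms(7) pos(2)] unfolding pos_def by blast
  have "(\<chi> i. y1 $ i / y1 $ i * sopt $ i) = sopt"
    using y1_pos unfolding pos_def by (simp add: vec_eq_iff less_imp_neq[symmetric])
  then have "(\<chi> i. g1 $ i / y1 $ i) \<bullet> ((\<chi> i. sopt $ i * y1 $ i) - w1) \<ge> 0"
    using supergradient_halfspace_recombined[OF assms(7) pos(2) y1_pos pos(3) assms(9)] assms(3)
    by simp
  moreover have "(\<chi> i. g0 $ i / y0 $ i) \<bullet> ((\<chi> i. sopt $ i * y1 $ i) - w0) \<ge> 0"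
    using supergradient_halfspace_recombined[OF assms(6) pos(1) y1_pos pos(3) assms(8)]
      assms(2,10) by linarith
  ultimately show ?thesis
    using recombined_weight_in_Ws[OF assms(7,5) wo(2)] by blast
qed

theorem proposition3p1:
  fixes A :: "real^'n^'m" and b :: "real^'m"
    and U :: "real^'m \<Rightarrow> real"
    and sopt w0 w1 y0 y1 s0 s1 g0 g1 :: "real^'m" and x0 x1 :: "real^'n"
  assumes "rank A = CARD('n)" and "CARD('n) \<le> CARD('m)"
    and "bounded (polyh A b)" and "interior (polyh A b) \<noteq> {}"
    and "concave_on {s. pos s} U" and "NDAS U"
    and "sopt \<in> Bs A b" and "\<forall>s\<in>Bs A b. U s \<le> U sopt"
    and "w0 \<in> Wset" and "w1 \<in> Wset"
    and "weighted_center A b w0 x0 y0 s0" and "weighted_center A b w1 x1 y1 s1"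
    and "supergradient U s0 g0" and "supergradient U s1 g1"
  shows "{w. (\<chi> i. g0 $ i / y0 $ i) \<bullet> (w - w0) \<ge> 0 \<and> (\<chi> i. g1 $ i / y1 $ i) \<bullet> (w - w1) \<ge> 0}
           \<inter> Ws A b sopt \<noteq> {}"
proof -
  have U_opt: "U s0 \<le> U sopt" "U s1 \<le> U sopt"
    using assms(8-12) unfolding Bs_def by blast+
  have y_pos: "y0 $ i > 0" "y1 $ i > 0" for i
    using weighted_center_dual_pos assms(9-12) unfolding Wset_def by blast+
  have "pos sopt" "pos (\<chi> i. y1 $ i / y0 $ i)"
    using assms(7) y_pos unfolding Bs_def weighted_center_def pos_def by auto
  from NDAS_scale_or_unscale[OF assms(6) this(2,1)]
  consider "U sopt \<le> U (\<chi> i. y1 $ i / y0 $ i * sopt $ i)"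
    | "U sopt \<le> U (\<chi> i. y0 $ i / y1 $ i * sopt $ i)"
    using y_pos by (auto simp: field_simps)
  then show ?thesis
  proof cases
    case 1
    from common_weight_if_scaling_improves[OF assms(7) U_opt assms(9-14) 1] show ?thesis by blast
  next
    case 2
    from common_weight_if_scaling_improves[OF assms(7) U_opt(2,1) assms(10,9,12,11,14,13) 2]
    show ?thesis by blast
  qed
qed

end
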